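(* Let $V$ be a nonzero finite-dimensional complex vector space with a norm $\lVert\cdot\rVert$, and let $G\le\mathrm U(V)$ be a finite group. Let $M=\{x\in G : \lVert \mathrm{id}_V-x\rVert_{\mathrm{op}}<1/2\}$ and let $A$ be the subgroup of $G$ generated by $M$. Then $A$ is an abelian normal subgroup of $G$.
   Context: $\mathrm U(V)$ denotes the group of linear isometries of $V$, i.e. the set of $x\in\mathrm{GL}(V)$ with $\lVert xv\rVert=\lVert v\rVert$ for all $v\in V$. For $a\in\mathrm{End}(V)$, the operator norm is $\lVert a\rVert_{\mathrm{op}}=\max\{\lVert av\rVert : v\in V,\ \lVert v\rVert=1\}$. *)

theory Defs
  imports "HOL-Analysis.Analysis" "HOL-Algebra.Generated_Groups"
begin

text \<open>V is modelled as complex^'n (any nonzero finite-dimensional complex vector space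
is isomorphic to one of these) equipped with an arbitrary norm N.\<close>

definition is_cnorm :: "(complex^'n \<Rightarrow> real) \<Rightarrow> bool" where
  "is_cnorm N \<longleftrightarrow>
     (\<forall>v. N v = 0 \<longleftrightarrow> v = 0) \<and>
     (\<forall>c v. N (c *s v) = cmod c * N v) \<and>
     (\<forall>v w. N (v + w) \<le> N v + N w)"

definition unitary_set :: "(complex^'n \<Rightarrow> real) \<Rightarrow> (complex^'n^'n) set" where
  "unitary_set N = {x. invertible x \<and> (\<forall>v. N (x *v v) = N v)}"

definition UGrp :: "(complex^'n \<Rightarrow> real) \<Rightarrow> (complex^'n^'n) monoid" where
  "UGrp N = \<lparr>carrier = unitary_set N, monoid.mult = (**), one = mat 1\<rparr>"

text \<open>Operator norm: max of N (a v) over unit vectors (written as Sup; the max is attained).\<close>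
definition opnorm :: "(complex^'n \<Rightarrow> real) \<Rightarrow> complex^'n^'n \<Rightarrow> real" where
  "opnorm N a = Sup {N (a *v v) | v. N v = 1}"

end

theory Submission
  imports Defs "HOL-Algebra.Multiplicative_Group"
begin

text \<open>Write d x for the operator norm of 1 - x. For isometries d is invariant under conjugation
  and d [x, y] \<le> 2 d x d y. The first fact makes the set M closed under conjugation, so the group
  it generates is normal. For commutativity, take non-commuting x, y with d x, d y < 1/2 and
  d x + d y minimal. Then w = [y, x] satisfies d w < d x, so by minimality w commutes with y, and
  conjugating x by y^k gives w^k x. Hence d (w^k) \<le> 2 d x < 1 for all k, and averaging over
  the finite cyclic group generated by w shows that it fixes every vector: w = 1, a contradiction.\<close>

text \<open>The library version of this rule is stated for real matrices only.\<close>
lemma matrix_vector_mult_scaleR_complex: "(a::complex^'n^'m) *v (r *\<^sub>R v) = r *\<^sub>R (a *v v)"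
  by (rule linear_cmul[OF matrix_vector_mul_linear])

lemma matrix_vector_mult_one_diff: "(mat 1 - a) *v v = v - a *v (v::'a::comm_ring_1^'n)"
  by (simp add: matrix_vector_mult_diff_rdistrib)

lemma (in group) conj_pow_eq_commutator_pow:
  fixes k :: nat
  assumes x: "x \<in> carrier G" and y: "y \<in> carrier G"
    and w_def: "w = y \<otimes> x \<otimes> inv y \<otimes> inv x" and wy: "w \<otimes> y = y \<otimes> w"
  shows "y [^] k \<otimes> x \<otimes> inv (y [^] k) = w [^] k \<otimes> x"
proof (induction k)
  case (Suc k)
  have w: "w \<in> carrier G"
    using x y by (simp add: w_def)
  have "y [^] Suc k \<otimes> x \<otimes> inv (y [^] Suc k) = y \<otimes> (y [^] k \<otimes> x \<otimes> inv (y [^] k)) \<otimes> inv y"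
    unfolding nat_pow_Suc2[OF y] using x y by (simp add: inv_mult_group m_assoc)
  also have "\<dots> = (y \<otimes> w [^] k) \<otimes> x \<otimes> inv y"
    using Suc x y w by (simp add: m_assoc)
  also have "\<dots> = w [^] k \<otimes> (y \<otimes> x \<otimes> inv y)"
    unfolding group_commutes_pow[OF wy w y, symmetric] using x y w by (simp add: m_assoc)
  also have "y \<otimes> x \<otimes> inv y = w \<otimes> x"
    using x y by (simp add: w_def m_assoc)
  finally show ?case
    using x w by (simp add: m_assoc)
qed (use x in simp)

lemma (in group) generate_commute:
  assumes S: "S \<subseteq> carrier G" and c: "c \<in> carrier G"
    and comm: "\<And>s. s \<in> S \<Longrightarrow> s \<otimes> c = c \<otimes> s" and a: "a \<in> generate G S"
  shows "a \<otimes> c = c \<otimes> a"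
  using a
proof (induction rule: generate.induct)
  case (inv h)
  then have "h \<in> carrier G" "h \<otimes> c = c \<otimes> h"
    using S comm by auto
  then show ?case
    using c by (metis inv_closed inv_solve_left inv_solve_right m_assoc m_closed)
next
  case (eng h1 h2)
  then show ?case
    using S c generate_in_carrier by (metis m_assoc)
qed (use c comm in auto)

lemma (in group) generate_pairwise_commute:
  assumes S: "S \<subseteq> carrier G" and comm: "\<And>s t. s \<in> S \<Longrightarrow> t \<in> S \<Longrightarrow> s \<otimes> t = t \<otimes> s"
    and a: "a \<in> generate G S" and b: "b \<in> generate G S"
  shows "a \<otimes> b = b \<otimes> a"
proof -
  have "s \<otimes> a = a \<otimes> s" if "s \<in> S" for s
    using generate_commute[OF S _ _ a] S comm that by (metis subsetD)
  then show ?thesis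
    using generate_commute[OF S generate_in_carrier[OF S a] _ b] by simp
qed

lemma UGrp_simps [simp]:
  "carrier (UGrp N) = unitary_set N" "x \<otimes>\<^bsub>UGrp N\<^esub> y = x ** y" "\<one>\<^bsub>UGrp N\<^esub> = mat 1"
  by (simp_all add: UGrp_def)

lemma unitary_set_isometry: "x \<in> unitary_set N \<Longrightarrow> N (x *v v) = N v"
  unfolding unitary_set_def by blast

lemma unitary_set_mult: "x \<in> unitary_set N \<Longrightarrow> y \<in> unitary_set N \<Longrightarrow> x ** y \<in> unitary_set N"
  unfolding unitary_set_def by (auto simp: invertible_mult matrix_vector_mul_assoc[symmetric])

lemma mat_1_unitary_set: "mat 1 \<in> unitary_set N"
  unfolding unitary_set_def invertible_def by (auto intro: exI[of _ "mat 1"])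

lemma group_UGrp: "group (UGrp N)"
proof (rule groupI)
  fix x assume "x \<in> carrier (UGrp N)"
  then have x: "x \<in> unitary_set N"
    by simp
  then obtain x' where x': "x ** x' = mat 1" "x' ** x = mat 1"
    unfolding unitary_set_def invertible_def by blast
  have "N (x' *v v) = N v" for v
    using unitary_set_isometry[OF x, of "x' *v v"] by (simp add: matrix_vector_mul_assoc x')
  with x' have "x' \<in> unitary_set N"
    unfolding unitary_set_def invertible_def by blast
  with x' show "\<exists>y\<in>carrier (UGrp N). y \<otimes>\<^bsub>UGrp N\<^esub> x = \<one>\<^bsub>UGrp N\<^esub>"
    by auto
qed (simp_all add: unitary_set_mult mat_1_unitary_set matrix_mul_assoc)

lemma sum_subgroup_UGrp_invariant:
  assumes K: "subgroup K (UGrp N)" and h: "h \<in> K"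
  shows "h *v (\<Sum>g\<in>K. g *v v) = (\<Sum>g\<in>K. g *v v)"
proof -
  interpret UGrp: group "UGrp N"
    by (rule group_UGrp)
  have hU: "h \<in> carrier (UGrp N)"
    using subgroup.mem_carrier[OF K h] .
  have "inj_on ((**) h) K"
    using UGrp.inj_on_cmult[OF hU] subgroup.subset[OF K] by (simp add: inj_on_subset)
  moreover have "(**) h ` K = K"
    using UGrp.coset_join3[OF hU K h] by (auto simp: l_coset_def)
  ultimately have "(\<Sum>g\<in>K. (h ** g) *v v) = (\<Sum>g\<in>K. g *v v)"
    by (metis (no_types, lifting) sum.reindex_cong)
  then show ?thesis
    by (simp only: vec.sum matrix_vector_mul_assoc)
qed

context
  fixes N :: "complex^'n \<Rightarrow> real"
  assumes cnorm: "is_cnorm N"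
begin

lemma cnorm_eq_0_iff: "N v = 0 \<longleftrightarrow> v = 0"
  using cnorm unfolding is_cnorm_def by blast

lemma cnorm_scale: "N (c *s v) = cmod c * N v"
  using cnorm unfolding is_cnorm_def by blast

lemma cnorm_triangle: "N (v + w) \<le> N v + N w"
  using cnorm unfolding is_cnorm_def by blast

lemma cnorm_0 [simp]: "N 0 = 0"
  using cnorm_eq_0_iff by blast

lemma cnorm_scaleR: "N (r *\<^sub>R v) = \<bar>r\<bar> * N v"
proof -
  have "r *\<^sub>R v = complex_of_real r *s v"
    by (simp add: vec_eq_iff) (simp add: scaleR_conv_of_real)
  then show ?thesis
    using cnorm_scale[of "complex_of_real r" v] by simp
qed

lemma cnorm_minus: "N (- v) = N v"
  using cnorm_scaleR[of "-1" v] by simp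

lemma cnorm_nonneg: "0 \<le> N v"
  using cnorm_triangle[of v "- v"] by (simp add: cnorm_minus)

lemma cnorm_pos: "v \<noteq> 0 \<Longrightarrow> 0 < N v"
  using cnorm_nonneg[of v] cnorm_eq_0_iff[of v] by linarith

lemma cnorm_diff_le: "N (v - w) \<le> N v + N w"
  using cnorm_triangle[of v "- w"] by (simp add: cnorm_minus)

lemma cnorm_commute: "N (v - w) = N (w - v)"
  using cnorm_minus[of "v - w"] by simp

lemma cnorm_sum_le: "N (sum f S) \<le> (\<Sum>i\<in>S. N (f i))"
proof (induction S rule: infinite_finite_induct)
  case (insert x F)
  then show ?case
    using cnorm_triangle[of "f x" "sum f F"] by simp
qed simp_all

lemma cnorm_le_norm: "\<exists>K\<ge>0. \<forall>v. N v \<le> K * norm v"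
proof (intro exI[of _ "\<Sum>i\<in>UNIV. N (axis i 1)"] conjI allI)
  show "0 \<le> (\<Sum>i\<in>UNIV. N (axis i 1))"
    by (simp add: sum_nonneg cnorm_nonneg)
  fix v :: "complex^'n"
  have "N v = N (\<Sum>i\<in>UNIV. v$i *s axis i 1)"
    by (simp add: basis_expansion)
  also have "\<dots> \<le> (\<Sum>i\<in>UNIV. N (v$i *s axis i 1))"
    by (rule cnorm_sum_le)
  also have "\<dots> = (\<Sum>i\<in>UNIV. cmod (v$i) * N (axis i 1))"
    by (simp add: cnorm_scale)
  also have "\<dots> \<le> (\<Sum>i\<in>UNIV. norm v * N (axis i 1))"
    by (intro sum_mono mult_right_mono)
      (auto simp: cnorm_nonneg intro: Finite_Cartesian_Product.norm_nth_le)
  finally show "N v \<le> (\<Sum>i\<in>UNIV. N (axis i 1)) * norm v"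
    by (simp add: sum_distrib_left mult.commute)
qed

lemma continuous_on_cnorm: "continuous_on S N"
proof -
  obtain K where K: "K \<ge> 0" "\<And>v. N v \<le> K * norm v"
    using cnorm_le_norm by blast
  have "\<bar>N v - N w\<bar> \<le> K * dist v w" for v w
  proof -
    have "\<bar>N v - N w\<bar> \<le> N (v - w)"
      using cnorm_triangle[of w "v - w"] cnorm_triangle[of v "w - v"] cnorm_commute[of v w]
      by simp
    then show ?thesis
      using K(2)[of "v - w"] by (simp add: dist_norm)
  qed
  then have "K-lipschitz_on S N"
    using K(1) by (auto simp: lipschitz_on_def dist_real_def)
  then show ?thesis
    by (rule lipschitz_on_continuous_on)
qed

lemma norm_le_cnorm: "\<exists>m>0. \<forall>v. m * norm v \<le> N v"
proof -
  obtain u where u: "u \<in> sphere 0 1" "\<And>v. v \<in> sphere 0 1 \<Longrightarrow> N u \<le> N v"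
    using continuous_attains_inf[OF compact_sphere _ continuous_on_cnorm, of 0 1] by auto
  have "N u > 0"
    using u(1) by (intro cnorm_pos) auto
  moreover have "N u * norm v \<le> N v" for v
  proof (cases "v = 0")
    case False
    then have "N u \<le> N ((1 / norm v) *\<^sub>R v)"
      by (intro u(2)) simp
    with False show ?thesis
      by (simp add: cnorm_scaleR field_simps)
  qed simp
  ultimately show ?thesis
    by blast
qed

lemma ex_cnorm_eq_1: "\<exists>v. N v = 1"
proof -
  have "N (axis undefined 1 :: complex^'n) > 0"
    by (intro cnorm_pos) (simp add: axis_eq_0_iff)
  then have "N ((1 / N (axis undefined 1)) *\<^sub>R axis undefined 1) = 1"
    by (simp add: cnorm_scaleR)
  then show ?thesis ..
qed

lemma cnorm_matrix_bound: "\<exists>C. \<forall>v. N (a *v v) \<le> C * N v"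
proof -
  obtain K where K: "K \<ge> 0" "\<And>v. N v \<le> K * norm v"
    using cnorm_le_norm by blast
  obtain m where m: "m > 0" "\<And>v. m * norm v \<le> N v"
    using norm_le_cnorm by blast
  obtain B where B: "B \<ge> 0" "\<And>v. norm (a *v v) \<le> norm v * B"
    using bounded_linear.nonneg_bounded[OF matrix_vector_mul_bounded_linear[of a]] by blast
  have "N (a *v v) \<le> (K * B / m) * N v" for v
  proof -
    have "N (a *v v) \<le> K * (norm v * B)"
      using K B(2)[of v] order_trans mult_left_mono by blast
    also have "\<dots> = (K * B / m) * (m * norm v)"
      using m by simp
    also have "\<dots> \<le> (K * B / m) * N v"
      using m K B by (intro mult_left_mono) auto
    finally show ?thesis .
  qed
  then show ?thesis
    by blast
qed

lemma opnorm_upper: "N v = 1 \<Longrightarrow> N (a *v v) \<le> opnorm N a"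
proof -
  obtain C where "\<forall>v. N (a *v v) \<le> C * N v"
    using cnorm_matrix_bound by blast
  then have "bdd_above {N (a *v v) | v. N v = 1}"
    by (auto intro!: bdd_aboveI[of _ C]) (metis mult.right_neutral)
  then show "N v = 1 \<Longrightarrow> N (a *v v) \<le> opnorm N a"
    unfolding opnorm_def by (intro cSup_upper) blast+
qed

lemma opnorm_nonneg: "0 \<le> opnorm N a"
  using ex_cnorm_eq_1 opnorm_upper cnorm_nonneg order_trans by blast

lemma opnorm_mult_le: "N (a *v v) \<le> opnorm N a * N v"
proof (cases "v = 0")
  case False
  then have pos: "N v > 0"
    by (rule cnorm_pos)
  have "N (a *v ((1 / N v) *\<^sub>R v)) \<le> opnorm N a"
    using pos by (intro opnorm_upper) (simp add: cnorm_scaleR)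
  then show ?thesis
    using pos by (simp add: matrix_vector_mult_scaleR_complex cnorm_scaleR field_simps)
qed simp

lemma opnorm_leI: "(\<And>v. N (a *v v) \<le> c * N v) \<Longrightarrow> opnorm N a \<le> c"
  unfolding opnorm_def using ex_cnorm_eq_1
  by (intro cSup_least) (auto, metis mult.right_neutral)

lemma opnorm_mult2_le: "N (a *v (b *v v)) \<le> opnorm N a * (opnorm N b * N v)"
  using opnorm_mult_le[of a "b *v v"] opnorm_mult_le[of b v]
    opnorm_nonneg[of a]
  by (meson order_trans mult_left_mono)

lemma opnorm_conj_le:
  assumes g: "g \<in> unitary_set N" and g': "g ** g' = mat 1"
  shows "opnorm N (mat 1 - g ** h ** g') \<le> opnorm N (mat 1 - h)"
proof (rule opnorm_leI)
  fix v
  have gg': "g *v (g' *v v) = v"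
    by (simp add: matrix_vector_mul_assoc g')
  have "(mat 1 - g ** h ** g') *v v = g *v ((mat 1 - h) *v (g' *v v))"
    by (simp add: gg' matrix_vector_mult_one_diff matrix_vector_mult_diff_distrib
        matrix_vector_mul_assoc[symmetric])
  then have "N ((mat 1 - g ** h ** g') *v v) = N ((mat 1 - h) *v (g' *v v))"
    by (simp add: unitary_set_isometry[OF g])
  also have "\<dots> \<le> opnorm N (mat 1 - h) * N (g' *v v)"
    by (rule opnorm_mult_le)
  also have "N (g' *v v) = N v"
    using unitary_set_isometry[OF g, of "g' *v v"] gg' by simp
  finally show "N ((mat 1 - g ** h ** g') *v v) \<le> opnorm N (mat 1 - h) * N v" .
qed

lemma opnorm_one_diff_le:
  assumes g: "g \<in> unitary_set N"
  shows "opnorm N (mat 1 - g) \<le> opnorm N (mat 1 - g ** h) + opnorm N (mat 1 - h)"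
proof (rule opnorm_leI)
  fix v
  have "(mat 1 - g) *v v = (mat 1 - g ** h) *v v - g *v ((mat 1 - h) *v v)"
    by (simp add: matrix_vector_mult_one_diff matrix_vector_mult_diff_distrib
        matrix_vector_mul_assoc)
  then have "N ((mat 1 - g) *v v) \<le> N ((mat 1 - g ** h) *v v) + N ((mat 1 - h) *v v)"
    using cnorm_diff_le[of "(mat 1 - g ** h) *v v" "g *v ((mat 1 - h) *v v)"]
    by (simp add: unitary_set_isometry[OF g])
  also have "\<dots> \<le> opnorm N (mat 1 - g ** h) * N v + opnorm N (mat 1 - h) * N v"
    by (intro add_mono opnorm_mult_le)
  finally show "N ((mat 1 - g) *v v) \<le> (opnorm N (mat 1 - g ** h) + opnorm N (mat 1 - h)) * N v"
    by (simp add: algebra_simps)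
qed

text \<open>The commutator identity 1 - x y x' y' = ((1 - y)(1 - x) - (1 - x)(1 - y)) x' y'.\<close>
lemma opnorm_commutator_le:
  assumes x': "x' \<in> unitary_set N" "x ** x' = mat 1" and y': "y' \<in> unitary_set N" "y ** y' = mat 1"
  shows "opnorm N (mat 1 - x ** y ** x' ** y') \<le> 2 * opnorm N (mat 1 - x) * opnorm N (mat 1 - y)"
proof (rule opnorm_leI)
  fix v
  let ?a = "opnorm N (mat 1 - x)" and ?b = "opnorm N (mat 1 - y)" and ?u = "x' *v (y' *v v)"
  have "x *v (x' *v w) = w" "y *v (y' *v w) = w" for w
    by (simp_all add: matrix_vector_mul_assoc x'(2) y'(2))
  then have "(mat 1 - x ** y ** x' ** y') *v v
      = (mat 1 - y) *v ((mat 1 - x) *v ?u) - (mat 1 - x) *v ((mat 1 - y) *v ?u)"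
    by (simp add: matrix_vector_mult_one_diff matrix_vector_mult_diff_distrib
        matrix_vector_mul_assoc[symmetric] algebra_simps)
  then have "N ((mat 1 - x ** y ** x' ** y') *v v)
      \<le> N ((mat 1 - y) *v ((mat 1 - x) *v ?u)) + N ((mat 1 - x) *v ((mat 1 - y) *v ?u))"
    by (simp add: cnorm_diff_le)
  also have "\<dots> \<le> ?b * (?a * N ?u) + ?a * (?b * N ?u)"
    by (intro add_mono opnorm_mult2_le)
  also have "N ?u = N v"
    by (simp add: unitary_set_isometry x'(1) y'(1))
  finally show "N ((mat 1 - x ** y ** x' ** y') *v v) \<le> 2 * ?a * ?b * N v"
    by (simp add: algebra_simps)
qed

lemma eq_one_if_opnorm_one_diff_eq_0:
  assumes "opnorm N (mat 1 - x) = 0"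
  shows "x = mat 1"
proof -
  have "N (v - x *v v) = 0" for v
    using opnorm_mult_le[of "mat 1 - x" v] cnorm_nonneg[of "v - x *v v"] assms
    by (simp add: matrix_vector_mult_one_diff)
  then show ?thesis
    by (simp add: matrix_eq cnorm_eq_0_iff)
qed

text \<open>Averaging: with n = card K and T = (\<Sum>h\<in>K. h), the vector u = n v - T v satisfies
  T u = 0, so n u = (\<Sum>h\<in>K. u - h u) and N (n u) \<le> n c N u. Hence u = 0, and v = T v / n is
  fixed by K.\<close>
lemma finite_subgroup_UGrp_near_one_trivial:
  assumes K: "subgroup K (UGrp N)" "finite K" and c: "c < 1"
    and near: "\<And>h. h \<in> K \<Longrightarrow> opnorm N (mat 1 - h) \<le> c" and g: "g \<in> K"
  shows "g = mat 1"
proof -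
  define T where "T v = (\<Sum>h\<in>K. h *v v)" for v
  define n where "n = real (card K)"
  have "K \<noteq> {}"
    using g by blast
  then have n: "n > 0"
    using K(2) by (simp add: n_def card_gt_0_iff)
  have T_fixed: "h *v T v = T v" if "h \<in> K" for h v
    unfolding T_def by (rule sum_subgroup_UGrp_invariant[OF K(1) that])
  have T_eq: "T v = n *\<^sub>R v" for v
  proof -
    define u where "u = n *\<^sub>R v - T v"
    have "T u = n *\<^sub>R T v - (\<Sum>h\<in>K. h *v T v)"
      by (simp add: T_def u_def matrix_vector_mult_diff_distrib matrix_vector_mult_scaleR_complex
          sum_subtractf scaleR_sum_right)
    also have "(\<Sum>h\<in>K. h *v T v) = (\<Sum>h\<in>K. T v)"
      using T_fixed by (rule sum.cong[OF refl])
    also have "n *\<^sub>R T v - (\<Sum>h\<in>K. T v) = 0"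
      by (simp add: n_def sum_constant_scaleR del: sum_constant)
    finally have "T u = 0" .
    then have "n *\<^sub>R u = (\<Sum>h\<in>K. (mat 1 - h) *v u)"
      by (simp add: T_def n_def matrix_vector_mult_one_diff sum_subtractf sum_constant_scaleR
          del: sum_constant)
    then have "n * N u = N (\<Sum>h\<in>K. (mat 1 - h) *v u)"
      using n by (metis cnorm_scaleR abs_of_pos)
    also have "\<dots> \<le> (\<Sum>h\<in>K. N ((mat 1 - h) *v u))"
      by (rule cnorm_sum_le)
    also have "\<dots> \<le> (\<Sum>h\<in>K. c * N u)"
      using near cnorm_nonneg opnorm_mult_le
      by (intro sum_mono) (meson mult_right_mono order_trans)
    also have "\<dots> = n * (c * N u)"
      by (simp add: n_def)
    finally have "N u \<le> c * N u"
      using n by simp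
    then have "\<not> N u > 0"
      using mult_strict_right_mono[OF c] by fastforce
    then have "u = 0"
      using cnorm_pos by blast
    then show ?thesis
      by (simp add: u_def)
  qed
  have "n *\<^sub>R (g *v v) = n *\<^sub>R v" for v
    using T_fixed[OF g, of v] T_eq[of v] by (simp add: matrix_vector_mult_scaleR_complex)
  then show ?thesis
    using n by (simp add: matrix_eq)
qed

end

locale finite_isometry_group =
  fixes N :: "complex^'n \<Rightarrow> real" and G :: "(complex^'n^'n) set"
  assumes cnorm: "is_cnorm N" and subgroup: "subgroup G (UGrp N)" and finite: "finite G"
begin

abbreviation H :: "(complex^'n^'n) monoid" where
  "H \<equiv> (UGrp N)\<lparr>carrier := G\<rparr>"

sublocale H: group H
  by (rule subgroup.subgroup_is_group[OF subgroup group_UGrp])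

lemma mult_closed: "x \<in> G \<Longrightarrow> y \<in> G \<Longrightarrow> x ** y \<in> G"
  using H.m_closed by simp

lemma pow_closed: "x \<in> G \<Longrightarrow> x [^]\<^bsub>H\<^esub> (k::nat) \<in> G"
  using H.nat_pow_closed by simp

lemma inv_closed: "x \<in> G \<Longrightarrow> inv\<^bsub>H\<^esub> x \<in> G"
  using H.inv_closed by simp

lemma unitary: "x \<in> G \<Longrightarrow> x \<in> unitary_set N"
  using subgroup.subset[OF subgroup] by auto

lemma r_inv: "x \<in> G \<Longrightarrow> x ** inv\<^bsub>H\<^esub> x = mat 1"
  using H.r_inv by simp

lemma inv_cancel_right: "x \<in> G \<Longrightarrow> z ** inv\<^bsub>H\<^esub> x ** x = z"
  using H.l_inv by (simp add: matrix_mul_assoc[symmetric])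

lemma opnorm_conj_inv_le:
  "g \<in> G \<Longrightarrow> opnorm N (mat 1 - g ** h ** inv\<^bsub>H\<^esub> g) \<le> opnorm N (mat 1 - h)"
  by (intro opnorm_conj_le[OF cnorm] unitary r_inv)

lemma commute_if_commutator_commutes:
  assumes x: "x \<in> G" and y: "y \<in> G" and small: "opnorm N (mat 1 - x) < 1/2"
    and w_def: "w = y ** x ** inv\<^bsub>H\<^esub> y ** inv\<^bsub>H\<^esub> x" and wy: "w ** y = y ** w"
  shows "x ** y = y ** x"
proof -
  have w: "w \<in> G"
    using x y by (simp add: w_def mult_closed inv_closed)
  define K where "K = generate H {w}"
  have "subgroup K (UGrp N)"
    unfolding K_def using w
    by (intro group.incl_subgroup[OF group_UGrp subgroup] H.generate_is_subgroup) auto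
  moreover have "finite K"
    using finite H.generate_incl[of "{w}"] w finite_subset unfolding K_def by auto
  moreover have "opnorm N (mat 1 - g) \<le> 2 * opnorm N (mat 1 - x)" if g: "g \<in> K" for g
  proof -
    obtain k where k: "g = w [^]\<^bsub>H\<^esub> (k::nat)"
      using g H.generate_pow_on_finite_carrier[of w] finite w unfolding K_def by auto
    have "y [^]\<^bsub>H\<^esub> k ** x ** inv\<^bsub>H\<^esub> (y [^]\<^bsub>H\<^esub> k) = g ** x"
      using H.conj_pow_eq_commutator_pow[of x y w k] x y wy by (simp add: k w_def)
    then have "opnorm N (mat 1 - g ** x) \<le> opnorm N (mat 1 - x)"
      using opnorm_conj_inv_le[of "y [^]\<^bsub>H\<^esub> k" x] pow_closed[OF y] by simp
    moreover have "g \<in> G"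
      using pow_closed[OF w] by (simp add: k)
    ultimately show ?thesis
      using opnorm_one_diff_le[OF cnorm unitary, of g x] by simp
  qed
  moreover have "w \<in> K"
    by (simp add: K_def generate.incl)
  ultimately have "w = mat 1"
    using small finite_subgroup_UGrp_near_one_trivial[OF cnorm, of K "2 * opnorm N (mat 1 - x)"]
    by auto
  moreover have "w ** (x ** y) = y ** x"
    using x y by (simp add: w_def matrix_mul_assoc inv_cancel_right)
  ultimately show ?thesis
    by simp
qed

lemma near_one_commute:
  assumes "x \<in> G" "y \<in> G" "opnorm N (mat 1 - x) < 1/2" "opnorm N (mat 1 - y) < 1/2"
  shows "x ** y = y ** x"
proof (rule ccontr)
  let ?d = "\<lambda>x. opnorm N (mat 1 - x)"
  define P where "P = {(x, y) \<in> G \<times> G. ?d x < 1/2 \<and> ?d y < 1/2 \<and> x ** y \<noteq> y ** x}"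
  assume "x ** y \<noteq> y ** x"
  with assms have "P \<noteq> {}"
    unfolding P_def by blast
  moreover have "finite P"
    using finite unfolding P_def by (auto intro: finite_subset[of _ "G \<times> G"])
  ultimately obtain x0 y0 where "(x0, y0) \<in> P"
    and min: "\<And>x y. (x, y) \<in> P \<Longrightarrow> ?d x0 + ?d y0 \<le> ?d x + ?d y"
    using ex_is_arg_min_if_finite[of P "\<lambda>(x, y). ?d x + ?d y"]
    unfolding is_arg_min_def by fastforce
  then have x0: "x0 \<in> G" "?d x0 < 1/2" and y0: "y0 \<in> G" "?d y0 < 1/2"
    and noncomm: "x0 ** y0 \<noteq> y0 ** x0"
    unfolding P_def by auto
  define w where "w = y0 ** x0 ** inv\<^bsub>H\<^esub> y0 ** inv\<^bsub>H\<^esub> x0"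
  have "?d x0 \<noteq> 0"
    using noncomm eq_one_if_opnorm_one_diff_eq_0[OF cnorm] by force
  then have "?d x0 > 0"
    using opnorm_nonneg[OF cnorm] by (simp add: order_less_le)
  with y0(2) have "2 * ?d y0 * ?d x0 < 1 * ?d x0"
    by (intro mult_strict_right_mono) auto
  moreover have "?d w \<le> 2 * ?d y0 * ?d x0"
    unfolding w_def using x0 y0
    by (intro opnorm_commutator_le[OF cnorm] unitary inv_closed r_inv)
  ultimately have dw: "?d w < ?d x0"
    by linarith
  have "w ** y0 = y0 ** w"
  proof (rule ccontr)
    assume "w ** y0 \<noteq> y0 ** w"
    moreover have "w \<in> G"
      using x0 y0 by (simp add: w_def mult_closed inv_closed)
    ultimately have "(w, y0) \<in> P"
      using dw x0 y0 unfolding P_def by auto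
    with min[of w y0] dw show False
      by simp
  qed
  then have "x0 ** y0 = y0 ** x0"
    by (rule commute_if_commutator_commutes[OF x0(1) y0(1) x0(2) w_def])
  with noncomm show False ..
qed

end

theorem mainTheorem6:
  fixes N :: "complex^'n \<Rightarrow> real" and G :: "(complex^'n^'n) set"
    and M A :: "(complex^'n^'n) set"
  assumes "is_cnorm N"
    and "subgroup G (UGrp N)"
    and "finite G"
    and "M = {x \<in> G. opnorm N (mat 1 - x) < 1/2}"
    and "A = generate ((UGrp N)\<lparr>carrier := G\<rparr>) M"
  shows "normal A ((UGrp N)\<lparr>carrier := G\<rparr>) \<and> (\<forall>a\<in>A. \<forall>b\<in>A. a ** b = b ** a)"
proof -
  interpret finite_isometry_group N G
    using assms(1-3) by (rule finite_isometry_group.intro)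
  have M: "M \<subseteq> carrier H"
    using assms(4) by auto
  have "generate H M \<lhd> H"
  proof (rule H.normal_generateI[OF M])
    fix h g
    assume "h \<in> M" and "g \<in> carrier H"
    then show "g \<otimes>\<^bsub>H\<^esub> h \<otimes>\<^bsub>H\<^esub> inv\<^bsub>H\<^esub> g \<in> M"
      using assms(4) opnorm_conj_inv_le[of g h] by (auto intro!: mult_closed inv_closed)
  qed
  moreover have "a ** b = b ** a" if "a \<in> generate H M" "b \<in> generate H M" for a b
    using H.generate_pairwise_commute[OF M _ that] near_one_commute assms(4) by auto
  ultimately show ?thesis
    using assms(5) by simp
qed

end
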